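(* Consider a finite MDP with states $\mathcal{X}=\{1,\dots,n\}$, finite action set $\mathcal{A}$, costs $c(i,a)$, discount factor $\vartheta\in(0,1)$, a policy $\pi:\mathcal{X}\to\mathcal{A}$, uncertainty sets $\mathcal{P}^a_i$ and proxy uncertainty sets $\widehat{\mathcal{P}^a_i}$, an exploration transition matrix $P^{\widehat{\pi}}$ with stationary distribution $\xi$, and a feature matrix $\Phi\in\mathbb{R}^{n\times d}$, all as in the context. Suppose there is $\alpha\in(0,1)$ such that $\vartheta p_j\le\alpha P^{\widehat{\pi}}_{ij}$ for all $i,j\in\mathcal{X}$, $a\in\mathcal{A}$ and $p\in\mathcal{P}^a_i$. Let $\beta^a_i:=\max_{y\in\widehat{U^a_i}}\min_{x\in U^a_i}\|y-x\|_\xi/\xi_{\min}$ and $\beta:=\max_{i\in\mathcal{X}}\beta^{\pi(i)}_i$. If $\alpha^2+\vartheta^2\beta^2<\tfrac12$, then for all $\theta,\theta'\in\mathbb{R}^d$, \[ \|\widehat{T}_\pi(\Phi\theta)-\widehat{T}_\pi(\Phi\theta')\|_\xi^2\le 2(\alpha^2+\vartheta^2\beta^2)\|\Phi\theta-\Phi\theta'\|_\xi^2, \] which is $<\|\Phi\theta-\Phi\theta'\|_\xi^2$ whenever $\Phi\theta\neq\Phi\theta'$. If moreover $\beta^{\pi(i)}_i=0$ for all $i$ (so $\widehat{U^{\pi(i)}_i}=U^{\pi(i)}_i$), then for all $\theta,\theta'\in\mathbb{R}^d$, $\|\widehat{T}_\pi(\Phi\theta)-\widehat{T}_\pi(\P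hi\theta')\|_\xi\le\alpha\|\Phi\theta-\Phi\theta'\|_\xi$.
   Context: For each $i\in\mathcal{X},a\in\mathcal{A}$: $p^a_i\in\Delta_n$ is the (unknown) nominal transition probability vector; $U^a_i\subseteq\mathbb{R}^n$ is a nonempty compact confidence region with $\mathcal{P}^a_i:=\{p^a_i+x\mid x\in U^a_i\}\subseteq\Delta_n$; $\widehat{U^a_i}\supseteq U^a_i$ is a nonempty compact proxy region and $\widehat{\mathcal{P}^a_i}:=\{p^a_i+y\mid y\in\widehat{U^a_i}\}$. $\sigma_S(v):=\sup_{s\in S}s^\top v$. The proxy robust Bellman operator is $(\widehat{T}_\pi v)(i):=c(i,\pi(i))+\vartheta\,\sigma_{\widehat{\mathcal{P}^{\pi(i)}_i}}(v)$ for $v\in\mathbb{R}^n$. $P^{\widehat{\pi}}$ is the $n\times n$ transition probability matrix of the exploration policy used to generate samples, $\xi$ is its steady-state distribution, assumed to have all entries positive, $\xi_{\min}:=\min_i\xi_i$, and $\|x\|_\xi:=(\sum_i\xi_ix_i^2)^{1/2}$. *)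

theory Defs
  imports "HOL-Analysis.Analysis"
begin

text \<open>States are a finite type 'x (so n = CARD('x)); vectors in R^n are real^'x.\<close>

definition prob_simplex :: "(real^'n) set" where
  "prob_simplex = {p. (\<forall>j. 0 \<le> p $ j) \<and> (\<Sum>j\<in>UNIV. p $ j) = 1}"

definition xi_norm :: "real^'n \<Rightarrow> real^'n \<Rightarrow> real" where
  "xi_norm \<xi> x = sqrt (\<Sum>i\<in>UNIV. \<xi> $ i * (x $ i)^2)"

definition support_fn :: "(real^'n) set \<Rightarrow> real^'n \<Rightarrow> real" where
  "support_fn S v = Sup ((\<lambda>s. s \<bullet> v) ` S)"

definition proxy_set :: "real^'n \<Rightarrow> (real^'n) set \<Rightarrow> (real^'n) set" where
  "proxy_set p U' = (\<lambda>y. p + y) ` U'"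

definition proxy_bellman ::
  "('n \<Rightarrow> 'a \<Rightarrow> real) \<Rightarrow> real \<Rightarrow> ('n \<Rightarrow> 'a) \<Rightarrow> ('n \<Rightarrow> 'a \<Rightarrow> real^'n)
     \<Rightarrow> ('n \<Rightarrow> 'a \<Rightarrow> (real^'n) set) \<Rightarrow> real^'n \<Rightarrow> real^'n" where
  "proxy_bellman c \<gamma> \<pi> pnom Uhat v =
     (\<chi> i. c i (\<pi> i) + \<gamma> * support_fn (proxy_set (pnom i (\<pi> i)) (Uhat i (\<pi> i))) v)"

definition xi_min :: "real^'n \<Rightarrow> real" where
  "xi_min \<xi> = Min (range (\<lambda>i. \<xi> $ i))"

text \<open>beta^a_i = (max_{y in hatU} min_{x in U} ||y - x||_xi) / xi_min
  (max/min attained since the sets are nonempty compact; written as Sup/Inf).\<close>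
definition beta_coef :: "real^'n \<Rightarrow> (real^'n) set \<Rightarrow> (real^'n) set \<Rightarrow> real" where
  "beta_coef \<xi> U Uhat =
     Sup ((\<lambda>y. Inf ((\<lambda>x. xi_norm \<xi> (y - x)) ` U)) ` Uhat) / xi_min \<xi>"

end

theory Submission
  imports Defs
begin

text \<open>Write \<open>w = v - v'\<close>. Row \<open>i\<close> of \<open>T v - T v'\<close> is \<open>\<gamma>\<close> times a difference of support
  functions of the proxy set, hence at most \<open>\<gamma> sup |s \<bullet> w|\<close> over proxy points \<open>s = p + y\<close>.
  Splitting \<open>s = q + (y - x)\<close>, where \<open>q = p + x\<close> lies in the genuine uncertainty set and
  \<open>x\<close> is closest to \<open>y\<close> in \<open>\<xi>\<close>-norm, the dominance hypothesis bounds \<open>\<gamma> |q \<bullet> w|\<close> by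
  \<open>\<alpha> (P |w|)\<^sub>i\<close>, and a \<open>\<xi>\<close>-weighted Cauchy-Schwarz inequality bounds \<open>|(y - x) \<bullet> w|\<close> by
  \<open>\<beta>\<^sub>i \<parallel>w\<parallel>\<^sub>\<xi>\<close>. Since \<open>\<xi>\<close> is stationary, \<open>P\<close> is nonexpansive in \<open>\<parallel>\<cdot>\<parallel>\<^sub>\<xi>\<close> (Jensen), and
  \<open>(a + b)\<^sup>2 \<le> 2a\<^sup>2 + 2b\<^sup>2\<close> finishes the estimate.\<close>

lemma xi_norm_power2:
  fixes \<xi> z :: "real^'n::finite"
  assumes "\<And>i. 0 \<le> \<xi> $ i"
  shows "(xi_norm \<xi> z)^2 = (\<Sum>i\<in>UNIV. \<xi> $ i * (z $ i)^2)"
  unfolding xi_norm_def using assms by (intro real_sqrt_pow2 sum_nonneg) simp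

lemma xi_norm_nonneg:
  fixes \<xi> z :: "real^'n::finite"
  assumes "\<And>i. 0 \<le> \<xi> $ i"
  shows "0 \<le> xi_norm \<xi> z"
  unfolding xi_norm_def using assms by (intro real_sqrt_ge_zero sum_nonneg) simp

lemma xi_norm_pos:
  fixes \<xi> z :: "real^'n::finite"
  assumes pos: "\<And>i. 0 < \<xi> $ i" and "z \<noteq> 0"
  shows "0 < xi_norm \<xi> z"
proof -
  obtain j where j: "z $ j \<noteq> 0" using \<open>z \<noteq> 0\<close> by (metis vec_eq_iff zero_index)
  have "0 < \<xi> $ j * (z $ j)^2" using j pos[of j] by simp
  also have "\<dots> \<le> (\<Sum>i\<in>UNIV. \<xi> $ i * (z $ i)^2)"
    using pos by (intro member_le_sum) (simp_all add: less_imp_le)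
  finally show ?thesis unfolding xi_norm_def by simp
qed

lemma xi_norm_mono:
  fixes \<xi> x y :: "real^'n::finite"
  assumes nn: "\<And>i. 0 \<le> \<xi> $ i" and le: "\<And>i. \<bar>x $ i\<bar> \<le> y $ i"
  shows "xi_norm \<xi> x \<le> xi_norm \<xi> y"
proof -
  have "(x $ i)^2 \<le> (y $ i)^2" for i
    using le[of i] by (metis abs_ge_zero power2_abs power_mono)
  then show ?thesis
    unfolding xi_norm_def using nn by (intro real_sqrt_le_mono sum_mono mult_left_mono) auto
qed

lemma xi_norm_abs: "xi_norm \<xi> (\<chi> j. \<bar>x $ j\<bar>) = xi_norm \<xi> x"
  by (simp add: xi_norm_def)

lemma xi_norm_scaleR:
  fixes \<xi> x :: "real^'n::finite"
  assumes "\<And>i. 0 \<le> \<xi> $ i"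
  shows "xi_norm \<xi> (c *\<^sub>R x) = \<bar>c\<bar> * xi_norm \<xi> x"
proof -
  have "(\<Sum>i\<in>UNIV. \<xi> $ i * (c * x $ i)^2) = c^2 * (\<Sum>i\<in>UNIV. \<xi> $ i * (x $ i)^2)"
    by (simp add: sum_distrib_left power_mult_distrib algebra_simps)
  then show ?thesis by (simp add: xi_norm_def real_sqrt_mult)
qed

lemma xi_norm_le_norm:
  fixes \<xi> z :: "real^'n::finite"
  assumes "\<xi> \<in> prob_simplex"
  shows "xi_norm \<xi> z \<le> norm z"
proof -
  have "(\<Sum>i\<in>UNIV. \<xi> $ i * (z $ i)^2) \<le> (\<Sum>i\<in>UNIV. \<xi> $ i * (norm z)^2)"
  proof (rule sum_mono)
    fix i
    have "(z $ i)^2 \<le> (norm z)^2"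
      using component_le_norm_cart[of z i] by (metis abs_ge_zero power2_abs power_mono)
    then show "\<xi> $ i * (z $ i)^2 \<le> \<xi> $ i * (norm z)^2"
      using assms by (auto simp: prob_simplex_def intro: mult_left_mono)
  qed
  also have "\<dots> = (norm z)^2"
    using assms by (simp add: prob_simplex_def sum_distrib_right[symmetric])
  finally show ?thesis
    unfolding xi_norm_def by (metis norm_ge_zero real_sqrt_le_mono real_sqrt_unique)
qed

lemma xi_min_pos:
  fixes \<xi> :: "real^'n::finite"
  assumes "\<And>i. 0 < \<xi> $ i"
  shows "0 < xi_min \<xi>"
proof -
  have "xi_min \<xi> \<in> range (\<lambda>i. \<xi> $ i)" unfolding xi_min_def by (rule Min_in) auto
  then show ?thesis using assms by auto
qed

lemma xi_min_le: "xi_min (\<xi> :: real^'n::finite) \<le> \<xi> $ j"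
  unfolding xi_min_def by (rule Min_le) auto

lemma abs_inner_le_xi_norm:
  fixes \<xi> d w :: "real^'n::finite"
  assumes pos: "\<And>i. 0 < \<xi> $ i"
  shows "\<bar>d \<bullet> w\<bar> \<le> xi_norm \<xi> d * xi_norm \<xi> w / xi_min \<xi>"
proof -
  define m where "m = xi_min \<xi>"
  have m: "0 < m" "\<And>j. m \<le> \<xi> $ j" using xi_min_pos[OF pos] xi_min_le unfolding m_def by auto
  have nn: "\<And>i. 0 \<le> \<xi> $ i" using pos less_imp_le by blast
  have "(d \<bullet> w)^2 = (\<Sum>j\<in>UNIV. (sqrt (\<xi>$j) * d$j) * (w$j / sqrt (\<xi>$j)))^2"
    unfolding inner_vec_def using pos
    by (intro arg_cong[where f="\<lambda>x. x^2"] sum.cong refl) (simp add: less_imp_le less_imp_neq[symmetric])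
  also have "\<dots> \<le> (\<Sum>j\<in>UNIV. (sqrt (\<xi>$j) * d$j)^2) * (\<Sum>j\<in>UNIV. (w$j / sqrt (\<xi>$j))^2)"
    by (rule Cauchy_Schwarz_ineq_sum)
  also have "(\<Sum>j\<in>UNIV. (sqrt (\<xi>$j) * d$j)^2) = (xi_norm \<xi> d)^2"
    using nn by (simp add: xi_norm_power2 power_mult_distrib)
  also have "(\<Sum>j\<in>UNIV. (w$j / sqrt (\<xi>$j))^2) \<le> (\<Sum>j\<in>UNIV. \<xi>$j * (w$j)^2 / m^2)"
  proof (rule sum_mono)
    fix j
    have "m^2 \<le> (\<xi>$j)^2" using m by (simp add: power_mono less_imp_le)
    then have "(w$j)^2 * m^2 \<le> (w$j)^2 * (\<xi>$j * \<xi>$j)" by (simp add: mult_left_mono power2_eq_square)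
    then show "(w$j / sqrt (\<xi>$j))^2 \<le> \<xi>$j * (w$j)^2 / m^2"
      using pos[of j] m by (simp add: power_divide less_imp_le divide_simps) (simp add: algebra_simps)
  qed
  also have "(\<Sum>j\<in>UNIV. \<xi>$j * (w$j)^2 / m^2) = (xi_norm \<xi> w)^2 / m^2"
    using nn by (simp add: xi_norm_power2 sum_divide_distrib)
  finally have "(d \<bullet> w)^2 \<le> (xi_norm \<xi> d * xi_norm \<xi> w / m)^2"
    using xi_norm_nonneg[OF nn] by (simp add: power_divide power_mult_distrib mult_left_mono)
  then show ?thesis unfolding m_def[symmetric]
    using xi_norm_nonneg[OF nn, of d] xi_norm_nonneg[OF nn, of w] m
    by (metis abs_le_square_iff abs_of_nonneg divide_nonneg_pos mult_nonneg_nonneg)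
qed

lemma xi_norm_power2_le_shift:
  fixes \<xi> d u :: "real^'n::finite"
  assumes "\<xi> \<in> prob_simplex" and le: "\<And>i. \<bar>d $ i\<bar> \<le> u $ i + b"
  shows "(xi_norm \<xi> d)^2 \<le> 2 * (xi_norm \<xi> u)^2 + 2 * b^2"
proof -
  have nn: "\<And>i. 0 \<le> \<xi> $ i" and one: "(\<Sum>i\<in>UNIV. \<xi> $ i) = 1"
    using assms(1) by (auto simp: prob_simplex_def)
  have "(d $ i)^2 \<le> 2 * (u $ i)^2 + 2 * b^2" for i
  proof -
    have "(d $ i)^2 \<le> (u $ i + b)^2" using le[of i] by (metis abs_ge_zero power2_abs power_mono)
    also have "\<dots> \<le> 2 * (u $ i)^2 + 2 * b^2"
      using zero_le_power2[of "u $ i - b"] unfolding power2_diff power2_sum by linarith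
    finally show ?thesis .
  qed
  then have "(\<Sum>i\<in>UNIV. \<xi> $ i * (d $ i)^2) \<le> (\<Sum>i\<in>UNIV. \<xi> $ i * (2 * (u $ i)^2 + 2 * b^2))"
    using nn by (intro sum_mono mult_left_mono) auto
  also have "\<dots> = 2 * (\<Sum>i\<in>UNIV. \<xi> $ i * (u $ i)^2) + 2 * b^2 * (\<Sum>i\<in>UNIV. \<xi> $ i)"
    by (simp add: distrib_left sum.distrib sum_distrib_left sum_distrib_right algebra_simps)
  finally show ?thesis using nn one by (simp add: xi_norm_power2)
qed

lemma power2_convex_comb_le:
  fixes r w :: "real^'n::finite"
  assumes nn: "\<And>j. 0 \<le> r $ j" and one: "(\<Sum>j\<in>UNIV. r $ j) = 1"
  shows "(\<Sum>j\<in>UNIV. r $ j * w $ j)^2 \<le> (\<Sum>j\<in>UNIV. r $ j * (w $ j)^2)"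
proof -
  have "(\<Sum>j\<in>UNIV. r $ j * w $ j)^2 = (\<Sum>j\<in>UNIV. sqrt (r$j) * (sqrt (r$j) * w $ j))^2"
    using nn by (simp add: mult.assoc[symmetric])
  also have "\<dots> \<le> (\<Sum>j\<in>UNIV. (sqrt (r$j))^2) * (\<Sum>j\<in>UNIV. (sqrt (r$j) * w $ j)^2)"
    by (rule Cauchy_Schwarz_ineq_sum)
  also have "\<dots> = (\<Sum>j\<in>UNIV. r $ j * (w $ j)^2)" using nn one by (simp add: power_mult_distrib)
  finally show ?thesis .
qed

lemma xi_norm_stochastic_le:
  fixes \<xi> w :: "real^'n::finite" and P :: "real^'n^'n"
  assumes nn: "\<And>i. 0 \<le> \<xi> $ i"
    and P_nonneg: "\<And>i j. 0 \<le> P $ i $ j" and P_rows: "\<And>i. (\<Sum>j\<in>UNIV. P $ i $ j) = 1"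
    and stat: "\<xi> v* P = \<xi>"
  shows "xi_norm \<xi> (P *v w) \<le> xi_norm \<xi> w"
proof -
  have "(\<Sum>i\<in>UNIV. \<xi> $ i * ((P *v w) $ i)^2) \<le> (\<Sum>i\<in>UNIV. \<xi> $ i * (\<Sum>j\<in>UNIV. P $ i $ j * (w $ j)^2))"
    using nn power2_convex_comb_le[OF P_nonneg P_rows]
    by (intro sum_mono mult_left_mono) (auto simp: matrix_vector_mult_def)
  also have "\<dots> = (\<Sum>j\<in>UNIV. (\<Sum>i\<in>UNIV. \<xi> $ i * P $ i $ j) * (w $ j)^2)"
    by (simp add: sum_distrib_left sum_distrib_right mult.assoc) (rule sum.swap)
  also have "\<dots> = (\<Sum>j\<in>UNIV. \<xi> $ j * (w $ j)^2)"
    using stat by (metis (no_types, lifting) vector_matrix_mult_def vec_lambda_beta sum.cong)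
  finally show ?thesis unfolding xi_norm_def by (rule real_sqrt_le_mono)
qed

lemma xi_norm_scaled_stochastic_abs_le:
  fixes \<xi> w :: "real^'n::finite" and P :: "real^'n^'n"
  assumes nn: "\<And>i. 0 \<le> \<xi> $ i"
    and P_nonneg: "\<And>i j. 0 \<le> P $ i $ j" and P_rows: "\<And>i. (\<Sum>j\<in>UNIV. P $ i $ j) = 1"
    and stat: "\<xi> v* P = \<xi>" and "0 \<le> \<alpha>"
  shows "xi_norm \<xi> (\<alpha> *\<^sub>R (P *v (\<chi> j. \<bar>w $ j\<bar>))) \<le> \<alpha> * xi_norm \<xi> w"
proof -
  have "xi_norm \<xi> (P *v (\<chi> j. \<bar>w $ j\<bar>)) \<le> xi_norm \<xi> w"
    using xi_norm_stochastic_le[OF nn P_nonneg P_rows stat, of "\<chi> j. \<bar>w $ j\<bar>"]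
    by (simp only: xi_norm_abs)
  then show ?thesis
    unfolding xi_norm_scaleR[OF nn] using \<open>0 \<le> \<alpha>\<close> by (simp add: mult_left_mono)
qed

lemma xi_norm_power2_le_of_row_bound:
  fixes \<xi> d w :: "real^'n::finite" and P :: "real^'n^'n"
  assumes xi: "\<xi> \<in> prob_simplex"
    and P_nonneg: "\<And>i j. 0 \<le> P $ i $ j" and P_rows: "\<And>i. (\<Sum>j\<in>UNIV. P $ i $ j) = 1"
    and stat: "\<xi> v* P = \<xi>" and "0 \<le> \<alpha>"
    and row: "\<And>i. \<bar>d $ i\<bar> \<le> (\<alpha> *\<^sub>R (P *v (\<chi> j. \<bar>w $ j\<bar>))) $ i + b"
  shows "(xi_norm \<xi> d)^2 \<le> 2 * (\<alpha> * xi_norm \<xi> w)^2 + 2 * b^2"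
proof -
  have nn: "\<And>i. 0 \<le> \<xi> $ i" using xi by (simp add: prob_simplex_def)
  have "(xi_norm \<xi> d)^2 \<le> 2 * (xi_norm \<xi> (\<alpha> *\<^sub>R (P *v (\<chi> j. \<bar>w $ j\<bar>))))^2 + 2 * b^2"
    by (rule xi_norm_power2_le_shift[OF xi row])
  also have "\<dots> \<le> 2 * (\<alpha> * xi_norm \<xi> w)^2 + 2 * b^2"
    using xi_norm_scaled_stochastic_abs_le[OF nn P_nonneg P_rows stat \<open>0 \<le> \<alpha>\<close>] xi_norm_nonneg[OF nn]
    by (simp add: power_mono)
  finally show ?thesis .
qed

lemma xi_norm_le_of_row_bound:
  fixes \<xi> d w :: "real^'n::finite" and P :: "real^'n^'n"
  assumes nn: "\<And>i. 0 \<le> \<xi> $ i"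
    and P_nonneg: "\<And>i j. 0 \<le> P $ i $ j" and P_rows: "\<And>i. (\<Sum>j\<in>UNIV. P $ i $ j) = 1"
    and stat: "\<xi> v* P = \<xi>" and "0 \<le> \<alpha>"
    and row: "\<And>i. \<bar>d $ i\<bar> \<le> (\<alpha> *\<^sub>R (P *v (\<chi> j. \<bar>w $ j\<bar>))) $ i"
  shows "xi_norm \<xi> d \<le> \<alpha> * xi_norm \<xi> w"
  using xi_norm_mono[OF nn row] xi_norm_scaled_stochastic_abs_le[OF nn P_nonneg P_rows stat \<open>0 \<le> \<alpha>\<close>]
  by (rule order_trans)

lemma support_fn_le_shift:
  fixes S :: "(real^'n::finite) set"
  assumes ne: "S \<noteq> {}" and bd: "bounded S" and le: "\<And>s. s \<in> S \<Longrightarrow> s \<bullet> v \<le> s \<bullet> v' + B"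
  shows "support_fn S v \<le> support_fn S v' + B"
proof -
  obtain M where M: "\<And>s. s \<in> S \<Longrightarrow> norm s \<le> M" using bd by (auto simp: bounded_iff)
  have bdd: "bdd_above ((\<lambda>s. s \<bullet> v') ` S)"
  proof (rule bdd_aboveI2)
    fix s assume "s \<in> S"
    have "s \<bullet> v' \<le> norm s * norm v'" by (rule Cauchy_Schwarz_ineq2[THEN abs_le_D1])
    also have "\<dots> \<le> M * norm v'" using M[OF \<open>s \<in> S\<close>] by (simp add: mult_right_mono)
    finally show "s \<bullet> v' \<le> M * norm v'" .
  qed
  show ?thesis unfolding support_fn_def
  proof (rule cSup_least)
    show "(\<lambda>s. s \<bullet> v) ` S \<noteq> {}" using ne by auto
  next
    fix x assume "x \<in> (\<lambda>s. s \<bullet> v) ` S"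
    then obtain s where s: "s \<in> S" "x = s \<bullet> v" by auto
    have "s \<bullet> v' \<le> Sup ((\<lambda>s. s \<bullet> v') ` S)" using s bdd by (auto intro: cSup_upper)
    then show "x \<le> Sup ((\<lambda>s. s \<bullet> v') ` S) + B" using le[OF s(1)] s by linarith
  qed
qed

lemma abs_support_fn_diff_le:
  fixes S :: "(real^'n::finite) set"
  assumes "S \<noteq> {}" "bounded S" and le: "\<And>s. s \<in> S \<Longrightarrow> \<bar>s \<bullet> (v - v')\<bar> \<le> B"
  shows "\<bar>support_fn S v - support_fn S v'\<bar> \<le> B"
proof -
  have "s \<bullet> v \<le> s \<bullet> v' + B" "s \<bullet> v' \<le> s \<bullet> v + B" if "s \<in> S" for s
    using le[OF that] by (auto simp: inner_diff_right abs_le_iff)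
  then have "support_fn S v \<le> support_fn S v' + B" "support_fn S v' \<le> support_fn S v + B"
    by (auto intro!: support_fn_le_shift[OF assms(1,2)])
  then show ?thesis by linarith
qed

lemma beta_coef_nearest_point:
  fixes \<xi> y :: "real^'n::finite" and U Uhat :: "(real^'n) set"
  assumes xi: "\<xi> \<in> prob_simplex" and pos: "\<And>i. 0 < \<xi> $ i"
    and U: "U \<noteq> {}" "compact U" and Uhat: "compact Uhat" and y: "y \<in> Uhat"
  shows "\<exists>x\<in>U. xi_norm \<xi> (y - x) \<le> beta_coef \<xi> U Uhat * xi_min \<xi>"
proof -
  define h where "h = (\<lambda>y. Inf ((\<lambda>x. xi_norm \<xi> (y - x)) ` U))"
  have nn: "\<And>i. 0 \<le> \<xi> $ i" using pos less_imp_le by blast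
  have h_le: "h y' \<le> xi_norm \<xi> (y' - x)" if "x \<in> U" for y' x
    unfolding h_def using that xi_norm_nonneg[OF nn]
    by (intro cInf_lower) (auto intro!: bdd_belowI[where m=0])
  obtain x0 where x0: "x0 \<in> U" using U by auto
  obtain M where M: "\<And>y. y \<in> Uhat \<Longrightarrow> norm y \<le> M"
    using compact_imp_bounded[OF Uhat] by (auto simp: bounded_iff)
  have "bdd_above (h ` Uhat)"
  proof (rule bdd_aboveI2)
    fix y' assume "y' \<in> Uhat"
    have "h y' \<le> norm (y' - x0)" using h_le[OF x0] xi_norm_le_norm[OF xi] order_trans by blast
    also have "\<dots> \<le> M + norm x0" using M[OF \<open>y' \<in> Uhat\<close>] norm_triangle_ineq4[of y' x0] by linarith
    finally show "h y' \<le> M + norm x0" .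
  qed
  then have "h y \<le> Sup (h ` Uhat)" using y by (simp add: cSup_upper)
  also have "\<dots> = beta_coef \<xi> U Uhat * xi_min \<xi>"
    unfolding beta_coef_def h_def using xi_min_pos[OF pos] by simp
  finally have "h y \<le> beta_coef \<xi> U Uhat * xi_min \<xi>" .
  moreover have "continuous_on U (\<lambda>x. xi_norm \<xi> (y - x))"
    unfolding xi_norm_def by (intro continuous_intros)
  then obtain x where "x \<in> U" "\<And>x'. x' \<in> U \<Longrightarrow> xi_norm \<xi> (y - x) \<le> xi_norm \<xi> (y - x')"
    using continuous_attains_inf[OF U(2,1)] by blast
  moreover from this have "h y = xi_norm \<xi> (y - x)"
    unfolding h_def by (intro cInf_eq_minimum) auto
  ultimately show ?thesis by auto
qed

lemma abs_inner_le_dominated: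
  fixes q r w :: "real^'n::finite"
  assumes "0 < \<gamma>" and q: "\<And>j. 0 \<le> q $ j" and dom: "\<And>j. \<gamma> * q $ j \<le> \<alpha> * r $ j"
  shows "\<gamma> * \<bar>q \<bullet> w\<bar> \<le> \<alpha> * (\<Sum>j\<in>UNIV. r $ j * \<bar>w $ j\<bar>)"
proof -
  have "\<gamma> * \<bar>q \<bullet> w\<bar> \<le> \<gamma> * (\<Sum>j\<in>UNIV. q $ j * \<bar>w $ j\<bar>)"
    unfolding inner_vec_def using assms(1) q
    by (intro mult_left_mono order_trans[OF sum_abs]) (auto simp: abs_mult)
  also have "\<dots> = (\<Sum>j\<in>UNIV. (\<gamma> * q $ j) * \<bar>w $ j\<bar>)" by (simp add: sum_distrib_left mult.assoc)
  also have "\<dots> \<le> (\<Sum>j\<in>UNIV. (\<alpha> * r $ j) * \<bar>w $ j\<bar>)"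
    by (intro sum_mono mult_right_mono dom) auto
  finally show ?thesis by (simp add: sum_distrib_left mult.assoc)
qed

lemma support_fn_proxy_set_diff_le:
  fixes p r \<xi> v v' :: "real^'n::finite" and U Uhat :: "(real^'n) set"
  assumes \<gamma>: "0 < \<gamma>" and xi: "\<xi> \<in> prob_simplex" and pos: "\<And>i. 0 < \<xi> $ i"
    and U: "U \<noteq> {}" "compact U" and Uhat: "Uhat \<noteq> {}" "compact Uhat"
    and models: "proxy_set p U \<subseteq> prob_simplex"
    and dom: "\<And>q j. q \<in> proxy_set p U \<Longrightarrow> \<gamma> * q $ j \<le> \<alpha> * r $ j"
  shows "\<gamma> * \<bar>support_fn (proxy_set p Uhat) v - support_fn (proxy_set p Uhat) v'\<bar>
     \<le> \<alpha> * (\<Sum>j\<in>UNIV. r $ j * \<bar>(v - v') $ j\<bar>) + \<gamma> * beta_coef \<xi> U Uhat * xi_norm \<xi> (v - v')"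
    (is "_ \<le> ?A + \<gamma> * ?b * ?W")
proof -
  have nn: "\<And>i. 0 \<le> \<xi> $ i" using pos less_imp_le by blast
  have "\<gamma> * \<bar>s \<bullet> (v - v')\<bar> \<le> ?A + \<gamma> * ?b * ?W" if s: "s \<in> proxy_set p Uhat" for s
  proof -
    obtain y where y: "y \<in> Uhat" "s = p + y" using s unfolding proxy_set_def by auto
    obtain x where x: "x \<in> U" and close: "xi_norm \<xi> (y - x) \<le> ?b * xi_min \<xi>"
      using beta_coef_nearest_point[OF xi pos U Uhat(2) y(1)] by blast
    have q: "p + x \<in> proxy_set p U" unfolding proxy_set_def using x by auto
    then have "\<gamma> * \<bar>(p + x) \<bullet> (v - v')\<bar> \<le> ?A"
      using models by (intro abs_inner_le_dominated[OF \<gamma> _ dom]) (auto simp: prob_simplex_def)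
    moreover have "\<bar>(y - x) \<bullet> (v - v')\<bar> \<le> ?b * ?W"
    proof -
      have "\<bar>(y - x) \<bullet> (v - v')\<bar> \<le> xi_norm \<xi> (y - x) * ?W / xi_min \<xi>"
        by (rule abs_inner_le_xi_norm[OF pos])
      also have "\<dots> \<le> ?b * xi_min \<xi> * ?W / xi_min \<xi>"
        using close xi_norm_nonneg[OF nn] xi_min_pos[OF pos]
        by (intro divide_right_mono mult_right_mono) auto
      finally show ?thesis using xi_min_pos[OF pos] by simp
    qed
    moreover have "\<bar>s \<bullet> (v - v')\<bar> \<le> \<bar>(p + x) \<bullet> (v - v')\<bar> + \<bar>(y - x) \<bullet> (v - v')\<bar>"
    proof -
      have "s = (p + x) + (y - x)" using y(2) by simp
      then show ?thesis by (metis abs_triangle_ineq inner_add_left)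
    qed
    ultimately show ?thesis using \<gamma>
      by (smt (verit) mult_left_mono distrib_left mult.assoc)
  qed
  moreover have "proxy_set p Uhat \<noteq> {}" "bounded (proxy_set p Uhat)"
    using Uhat by (auto simp: proxy_set_def bounded_translation compact_imp_bounded)
  ultimately have "\<bar>support_fn (proxy_set p Uhat) v - support_fn (proxy_set p Uhat) v'\<bar> \<le> (?A + \<gamma> * ?b * ?W) / \<gamma>"
    using \<gamma> by (intro abs_support_fn_diff_le) (auto simp: pos_le_divide_eq mult.commute)
  then show ?thesis using \<gamma> by (simp add: pos_le_divide_eq mult.commute)
qed

lemma proxy_bellman_diff_component_le:
  fixes \<xi> v v' :: "real^'n::finite" and P :: "real^'n^'n"
  assumes \<gamma>: "0 < \<gamma>" and xi: "\<xi> \<in> prob_simplex" and pos: "\<And>i. 0 < \<xi> $ i"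
    and U: "U i (\<pi> i) \<noteq> {}" "compact (U i (\<pi> i))"
    and Uhat: "Uhat i (\<pi> i) \<noteq> {}" "compact (Uhat i (\<pi> i))"
    and models: "proxy_set (pnom i (\<pi> i)) (U i (\<pi> i)) \<subseteq> prob_simplex"
    and dom: "\<And>q j. q \<in> proxy_set (pnom i (\<pi> i)) (U i (\<pi> i)) \<Longrightarrow> \<gamma> * q $ j \<le> \<alpha> * P $ i $ j"
    and beta: "beta_coef \<xi> (U i (\<pi> i)) (Uhat i (\<pi> i)) \<le> b"
  shows "\<bar>(proxy_bellman c \<gamma> \<pi> pnom Uhat v - proxy_bellman c \<gamma> \<pi> pnom Uhat v') $ i\<bar>
     \<le> (\<alpha> *\<^sub>R (P *v (\<chi> j. \<bar>(v - v') $ j\<bar>))) $ i + \<gamma> * b * xi_norm \<xi> (v - v')"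
proof -
  let ?\<sigma> = "support_fn (proxy_set (pnom i (\<pi> i)) (Uhat i (\<pi> i)))"
  have "\<bar>(proxy_bellman c \<gamma> \<pi> pnom Uhat v - proxy_bellman c \<gamma> \<pi> pnom Uhat v') $ i\<bar>
      = \<gamma> * \<bar>?\<sigma> v - ?\<sigma> v'\<bar>"
    using \<gamma> by (simp add: proxy_bellman_def abs_mult flip: right_diff_distrib)
  also have "\<dots> \<le> \<alpha> * (\<Sum>j\<in>UNIV. P $ i $ j * \<bar>(v - v') $ j\<bar>)
      + \<gamma> * beta_coef \<xi> (U i (\<pi> i)) (Uhat i (\<pi> i)) * xi_norm \<xi> (v - v')"
    by (rule support_fn_proxy_set_diff_le[OF \<gamma> xi pos U Uhat models dom])
  also have "\<dots> \<le> \<alpha> * (\<Sum>j\<in>UNIV. P $ i $ j * \<bar>(v - v') $ j\<bar>) + \<gamma> * b * xi_norm \<xi> (v - v')"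
    using \<gamma> beta xi_norm_nonneg[of \<xi>] pos by (simp add: less_imp_le mult_right_mono)
  finally show ?thesis by (simp add: matrix_vector_mult_def)
qed

theorem theorem4:
  fixes c :: "'x::finite \<Rightarrow> 'a::finite \<Rightarrow> real"
    and \<gamma> :: real
    and \<pi> :: "'x \<Rightarrow> 'a"
    and pnom :: "'x \<Rightarrow> 'a \<Rightarrow> real^'x"
    and U Uhat :: "'x \<Rightarrow> 'a \<Rightarrow> (real^'x) set"
    and Pexp :: "real^'x^'x"
    and \<xi> :: "real^'x"
    and \<Phi> :: "real^'d::finite^'x"
    and \<alpha> :: real
  assumes disc: "0 < \<gamma>" "\<gamma> < 1"
    and nominal: "\<And>i a. pnom i a \<in> prob_simplex"
    and U_ne: "\<And>i a. U i a \<noteq> {}" and U_compact: "\<And>i a. compact (U i a)"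
    and U_simplex: "\<And>i a. proxy_set (pnom i a) (U i a) \<subseteq> prob_simplex"
    and Uhat_ne: "\<And>i a. Uhat i a \<noteq> {}" and Uhat_compact: "\<And>i a. compact (Uhat i a)"
    and Uhat_sup: "\<And>i a. U i a \<subseteq> Uhat i a"
    and P_nonneg: "\<And>i j. 0 \<le> Pexp $ i $ j"
    and P_rows: "\<And>i. (\<Sum>j\<in>UNIV. Pexp $ i $ j) = 1"
    and xi_simplex: "\<xi> \<in> prob_simplex"
    and xi_pos: "\<And>i. 0 < \<xi> $ i"
    and xi_stat: "\<xi> v* Pexp = \<xi>"
    and alpha: "0 < \<alpha>" "\<alpha> < 1"
    and dom: "\<And>i j a p. p \<in> proxy_set (pnom i a) (U i a) \<Longrightarrow> \<gamma> * p $ j \<le> \<alpha> * Pexp $ i $ j"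
    and small: "\<alpha>^2 + \<gamma>^2 * (Max (range (\<lambda>i. beta_coef \<xi> (U i (\<pi> i)) (Uhat i (\<pi> i)))))^2 < 1/2"
  shows "(let \<beta> = Max (range (\<lambda>i. beta_coef \<xi> (U i (\<pi> i)) (Uhat i (\<pi> i))));
              T = proxy_bellman c \<gamma> \<pi> pnom Uhat in
           (\<forall>\<theta> \<theta>'. (xi_norm \<xi> (T (\<Phi> *v \<theta>) - T (\<Phi> *v \<theta>')))^2
                     \<le> 2 * (\<alpha>^2 + \<gamma>^2 * \<beta>^2) * (xi_norm \<xi> (\<Phi> *v \<theta> - \<Phi> *v \<theta>'))^2)
         \<and> (\<forall>\<theta> \<theta>'. \<Phi> *v \<theta> \<noteq> \<Phi> *v \<theta>' \<longrightarrow>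
                 2 * (\<alpha>^2 + \<gamma>^2 * \<beta>^2) * (xi_norm \<xi> (\<Phi> *v \<theta> - \<Phi> *v \<theta>'))^2
                   < (xi_norm \<xi> (\<Phi> *v \<theta> - \<Phi> *v \<theta>'))^2)
         \<and> ((\<forall>i. beta_coef \<xi> (U i (\<pi> i)) (Uhat i (\<pi> i)) = 0) \<longrightarrow>
              (\<forall>\<theta> \<theta>'. xi_norm \<xi> (T (\<Phi> *v \<theta>) - T (\<Phi> *v \<theta>'))
                     \<le> \<alpha> * xi_norm \<xi> (\<Phi> *v \<theta> - \<Phi> *v \<theta>'))))"
proof -
  define \<beta> where "\<beta> = Max (range (\<lambda>i. beta_coef \<xi> (U i (\<pi> i)) (Uhat i (\<pi> i))))"
  define T where "T = proxy_bellman c \<gamma> \<pi> pnom Uhat"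
  have row: "\<bar>(T v - T v') $ i\<bar>
      \<le> (\<alpha> *\<^sub>R (Pexp *v (\<chi> j. \<bar>(v - v') $ j\<bar>))) $ i + \<gamma> * \<beta> * xi_norm \<xi> (v - v')" for v v' i
    unfolding T_def
    by (rule proxy_bellman_diff_component_le[where U = U and Uhat = Uhat and \<pi> = \<pi> and pnom = pnom,
          OF disc(1) xi_simplex xi_pos U_ne U_compact Uhat_ne Uhat_compact U_simplex])
      (auto intro: dom simp: \<beta>_def)
  have contraction: "(xi_norm \<xi> (T v - T v'))^2 \<le> 2 * (\<alpha>^2 + \<gamma>^2 * \<beta>^2) * (xi_norm \<xi> (v - v'))^2"
    for v v'
    using xi_norm_power2_le_of_row_bound[OF xi_simplex P_nonneg P_rows xi_stat _ row] alpha
    by (simp add: power_mult_distrib algebra_simps)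
  have strict: "2 * (\<alpha>^2 + \<gamma>^2 * \<beta>^2) * (xi_norm \<xi> (v - v'))^2 < (xi_norm \<xi> (v - v'))^2"
    if "v \<noteq> v'" for v v' :: "real^'x"
    using small xi_norm_pos[OF xi_pos, of "v - v'"] that unfolding \<beta>_def by simp
  have exact: "xi_norm \<xi> (T v - T v') \<le> \<alpha> * xi_norm \<xi> (v - v')"
    if "\<forall>i. beta_coef \<xi> (U i (\<pi> i)) (Uhat i (\<pi> i)) = 0" for v v'
  proof -
    have "\<beta> = 0" unfolding \<beta>_def using that by simp
    with row show ?thesis
      using xi_pos alpha by (intro xi_norm_le_of_row_bound[OF _ P_nonneg P_rows xi_stat]) (auto intro: less_imp_le)
  qed
  show ?thesis
    unfolding Let_def \<beta>_def[symmetric] T_def[symmetric] using contraction strict exact by blast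
qed

end
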